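(* Let $G$ be a connected split graph whose vertex set is partitioned into a clique of order $r$ and an independent set of order $s$. Then for every integer $t\ge 3$, $\varphi(G^t)=\frac{1}{2}(r+s-1)(r+s-2)$.
   Context: All graphs are finite, simple and without isolated vertices. $\mathbb{N}_0$ denotes the set of non-negative integers; for finite $A,B\subseteq\mathbb{N}_0$, $A+B=\{a+b: a\in A, b\in B\}$. An integer additive set-indexer (IASI) of a graph $G$ is an injective map $f$ from $V(G)$ to the finite non-empty subsets of $\mathbb{N}_0$ such that the induced edge map $f^+(uv)=f(u)+f(v)$ is injective on $E(G)$. A weak IASI (WIASI) is an IASI $f$ with $|f^+(uv)|=\max(|f(u)|,|f(v)|)$ for every edge $uv$ (equivalently, for every edge at least one end vertex has a singleton label). A vertex or edge is mono-indexed if its set-label has cardinality $1$. Every graph admits a WIASI. The sparing number $\varphi(G)$ is the minimum, over all WIASIs of $G$, of the number of mono-indexed edges of $G$. The $t$-th power $G^t$ has vertex set $V(G)$, two distinct vertices being adjacent iff their distance in $G$ is at most $t$. A split graph is a graph whose vertex set can be partitioned into a clique and an independent set. *)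

theory Defs
  imports Complex_Main
begin

definition graph :: "'a set \<Rightarrow> 'a set set \<Rightarrow> bool" where
  "graph V E \<longleftrightarrow> finite V
     \<and> (\<forall>e\<in>E. \<exists>u v. u \<noteq> v \<and> u \<in> V \<and> v \<in> V \<and> e = {u, v})
     \<and> (\<forall>v\<in>V. \<exists>e\<in>E. v \<in> e)"

definition walk :: "'a set set \<Rightarrow> 'a list \<Rightarrow> bool" where
  "walk E xs \<longleftrightarrow> xs \<noteq> [] \<and> (\<forall>i. Suc i < length xs \<longrightarrow> {xs ! i, xs ! Suc i} \<in> E)"

definition dist_le :: "'a set set \<Rightarrow> 'a \<Rightarrow> 'a \<Rightarrow> nat \<Rightarrow> bool" where
  "dist_le E u v k \<longleftrightarrow> (\<exists>xs. walk E xs \<and> hd xs = u \<and> last xs = v \<and> length xs \<le> Suc k)"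

definition connected_graph :: "'a set \<Rightarrow> 'a set set \<Rightarrow> bool" where
  "connected_graph V E \<longleftrightarrow> V \<noteq> {} \<and> (\<forall>u\<in>V. \<forall>v\<in>V. \<exists>k. dist_le E u v k)"

definition graph_power :: "'a set \<Rightarrow> 'a set set \<Rightarrow> nat \<Rightarrow> 'a set set" where
  "graph_power V E t = {{u, v} | u v. u \<in> V \<and> v \<in> V \<and> u \<noteq> v \<and> dist_le E u v t}"

definition is_split_partition :: "'a set \<Rightarrow> 'a set set \<Rightarrow> 'a set \<Rightarrow> 'a set \<Rightarrow> bool" where
  "is_split_partition V E K I \<longleftrightarrow> K \<union> I = V \<and> K \<inter> I = {}
     \<and> (\<forall>u\<in>K. \<forall>v\<in>K. u \<noteq> v \<longrightarrow> {u, v} \<in> E)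
     \<and> (\<forall>u\<in>I. \<forall>v\<in>I. {u, v} \<notin> E)"

definition sumset :: "nat set \<Rightarrow> nat set \<Rightarrow> nat set" where
  "sumset A B = {a + b | a b. a \<in> A \<and> b \<in> B}"

definition IASI :: "'a set \<Rightarrow> 'a set set \<Rightarrow> ('a \<Rightarrow> nat set) \<Rightarrow> bool" where
  "IASI V E f \<longleftrightarrow> inj_on f V
     \<and> (\<forall>v\<in>V. finite (f v) \<and> f v \<noteq> {})
     \<and> (\<forall>u v x y. {u, v} \<in> E \<longrightarrow> {x, y} \<in> E \<longrightarrow>
           sumset (f u) (f v) = sumset (f x) (f y) \<longrightarrow> {u, v} = {x, y})"

definition WIASI :: "'a set \<Rightarrow> 'a set set \<Rightarrow> ('a \<Rightarrow> nat set) \<Rightarrow> bool" where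
  "WIASI V E f \<longleftrightarrow> IASI V E f
     \<and> (\<forall>u v. {u, v} \<in> E \<longrightarrow> card (sumset (f u) (f v)) = max (card (f u)) (card (f v)))"

definition mono_edges :: "'a set set \<Rightarrow> ('a \<Rightarrow> nat set) \<Rightarrow> 'a set set" where
  "mono_edges E f = {e \<in> E. \<exists>u v. e = {u, v} \<and> card (sumset (f u) (f v)) = 1}"

definition sparing_number :: "'a set \<Rightarrow> 'a set set \<Rightarrow> nat" where
  "sparing_number V E = (LEAST n. \<exists>f. WIASI V E f \<and> card (mono_edges E f) = n)"

end

theory Submission
  imports Defs
begin

text \<open>
  Every
  independent vertex has a clique neighbour, so any two vertices are joined by a walk
  u, k, l, v with k, l in K; hence G has diameter at most 3 and G^t is the complete graph on
  V for every t at least 3. The theorem thus reduces to the sparing number of a complete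
  graph on n = r + s vertices, which is (n - 1) choose 2:
  \<^item> lower bound: in a weak IASI an edge can never join two vertices with non-singleton
    labels, so in a complete graph at most one vertex has a non-singleton label and all
    pairs among the remaining at least n - 1 vertices are mono-indexed;
  \<^item> upper bound: label one vertex v0 by {0, 1} and the others by distinct powers of two;
    this is a weak IASI whose mono-indexed edges are exactly the edges avoiding v0.
\<close>

lemma sumset_commute: "sumset A B = sumset B A"
  unfolding sumset_def by (metis add.commute)

lemma sumset_singletons: "sumset {a} {b} = {a + b}"
  unfolding sumset_def by auto

lemma finite_sumset:
  assumes "finite A" "finite B"
  shows "finite (sumset A B)"
proof -
  have "sumset A B = (\<lambda>(x, y). x + y) ` (A \<times> B)"
    unfolding sumset_def by force
  then show ?thesis using assms by simp
qed

text \<open>Adding a set with at least two elements strictly enlarges a finite set: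
  if a < a' in A and b = max B, then a + B together with a' + b lies in A + B.
  This is why a WIASI cannot join two vertices with non-singleton labels.\<close>
lemma card_sumset_gt:
  assumes A: "finite A" "card A \<ge> 2" and B: "finite B" "B \<noteq> {}"
  shows "card B < card (sumset A B)"
proof -
  obtain a a' where aa': "a \<in> A" "a' \<in> A" "a < a'"
  proof -
    obtain x y where "x \<in> A" "y \<in> A" "x \<noteq> y"
      using A card_le_Suc0_iff_eq[of A] by auto
    then show ?thesis using that by (cases "x < y") auto
  qed
  define b where "b = Max B"
  have b: "b \<in> B" "\<And>x. x \<in> B \<Longrightarrow> x \<le> b"
    using B by (simp_all add: b_def)
  have new: "a' + b \<notin> (+) a ` B"
    using b(2) aa'(3) by fastforce
  have "card B < card (insert (a' + b) ((+) a ` B))"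
    using new B by (simp add: card_image)
  also have "\<dots> \<le> card (sumset A B)"
    by (rule card_mono[OF finite_sumset[OF A(1) B(1)]])
       (use aa' b in \<open>auto simp: sumset_def\<close>)
  finally show ?thesis .
qed

lemma walk_Cons:
  assumes "xs \<noteq> []"
  shows "walk E (x # xs) \<longleftrightarrow> {x, hd xs} \<in> E \<and> walk E xs"
proof -
  obtain y ys where xs: "xs = y # ys" using assms by (cases xs) auto
  have "walk E (x # y # ys) \<longleftrightarrow> {x, y} \<in> E \<and> walk E (y # ys)"
    unfolding walk_def
    by (auto simp: less_Suc_eq_0_disj All_less_Suc2)
  then show ?thesis using xs by simp
qed

lemma walk_append:
  assumes "walk E xs" "walk E ys" "last xs = hd ys"
  shows "walk E (xs @ tl ys)"
proof -
  have "xs \<noteq> []" using assms(1) by (simp add: walk_def)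
  then show ?thesis using assms
  proof (induction xs rule: list_nonempty_induct)
    case (single x)
    then show ?case by (cases ys) (simp_all add: walk_def)
  next
    case (cons x xs)
    then show ?case by (simp add: walk_Cons)
  qed
qed

lemma dist_le_refl: "dist_le E u u k"
  unfolding dist_le_def by (rule exI[of _ "[u]"]) (simp add: walk_def)

lemma dist_le_edge: "{u, v} \<in> E \<Longrightarrow> dist_le E u v 1"
  unfolding dist_le_def by (rule exI[of _ "[u, v]"]) (simp add: walk_Cons walk_def)

lemma dist_le_mono: "dist_le E u v a \<Longrightarrow> a \<le> b \<Longrightarrow> dist_le E u v b"
  unfolding dist_le_def by fastforce

lemma dist_le_trans:
  assumes "dist_le E u v a" "dist_le E v w b"
  shows "dist_le E u w (a + b)"
proof -
  obtain xs where xs: "walk E xs" "hd xs = u" "last xs = v" "length xs \<le> Suc a"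
    using assms(1) unfolding dist_le_def by blast
  obtain ys where ys: "walk E ys" "hd ys = v" "last ys = w" "length ys \<le> Suc b"
    using assms(2) unfolding dist_le_def by blast
  have ne: "xs \<noteq> []" "ys \<noteq> []" using xs(1) ys(1) by (simp_all add: walk_def)
  have "walk E (xs @ tl ys)" using walk_append[OF xs(1) ys(1)] xs(3) ys(2) by simp
  moreover have "hd (xs @ tl ys) = u" "last (xs @ tl ys) = w"
    using ne xs(2,3) ys(2,3) by (cases ys; auto simp: last_append)+
  moreover have "length (xs @ tl ys) \<le> Suc (a + b)"
    using xs(4) ys(4) by simp
  ultimately show ?thesis unfolding dist_le_def by blast
qed

text \<open>In a split graph without isolated vertices every vertex lies in the clique or is
  adjacent to it, since an independent vertex can only have clique neighbours.\<close>
lemma split_near_clique: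
  assumes "graph V E" "is_split_partition V E K I" "v \<in> V"
  shows "\<exists>k\<in>K. k = v \<or> {k, v} \<in> E"
proof (cases "v \<in> K")
  case False
  then have vI: "v \<in> I" using assms(2,3) unfolding is_split_partition_def by blast
  obtain e where e: "e \<in> E" "v \<in> e" using assms(1,3) unfolding graph_def by blast
  moreover obtain x y where "x \<in> V" "y \<in> V" "e = {x, y}"
    using e(1) assms(1) unfolding graph_def by blast
  ultimately obtain w where w: "w \<in> V" "e = {w, v}"
    by (auto simp: insert_commute)
  have "w \<notin> I" using assms(2) vI w e unfolding is_split_partition_def by blast
  then have "w \<in> K" using assms(2) w unfolding is_split_partition_def by blast
  then show ?thesis using e w by blast
qed blast

lemma split_dist_le_3:
  assumes "graph V E" "is_split_partition V E K I" "u \<in> V" "v \<in> V"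
  shows "dist_le E u v 3"
proof -
  have near: "dist_le E k w 1" "dist_le E w k 1" if "k = w \<or> {k, w} \<in> E" for k w
  proof -
    have "{w, k} = {k, w}" by blast
    then show "dist_le E k w 1" "dist_le E w k 1"
      using that dist_le_refl dist_le_edge[of k w E] dist_le_edge[of w k E] by auto
  qed
  obtain k where k: "k \<in> K" "k = u \<or> {k, u} \<in> E"
    using split_near_clique[OF assms(1,2,3)] by blast
  obtain l where l: "l \<in> K" "l = v \<or> {l, v} \<in> E"
    using split_near_clique[OF assms(1,2,4)] by blast
  have "k = l \<or> {k, l} \<in> E"
    using assms(2) k(1) l(1) unfolding is_split_partition_def by blast
  then have kl: "dist_le E k l 1" by (rule near(1))
  have "dist_le E u v (1 + 1 + 1)"
    by (rule dist_le_trans[OF dist_le_trans[OF near(2)[OF k(2)] kl] near(1)[OF l(2)]])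
  then show ?thesis by (simp add: numeral_3_eq_3)
qed

definition complete_edges :: "'a set \<Rightarrow> 'a set set" where
  "complete_edges V = {{u, v} | u v. u \<in> V \<and> v \<in> V \<and> u \<noteq> v}"

lemma complete_edges_iff: "{u, v} \<in> complete_edges V \<longleftrightarrow> u \<in> V \<and> v \<in> V \<and> u \<noteq> v"
  unfolding complete_edges_def by (auto simp: doubleton_eq_iff)

lemma split_graph_power_complete:
  assumes "graph V E" "is_split_partition V E K I" "3 \<le> t"
  shows "graph_power V E t = complete_edges V"
proof -
  have "dist_le E u v t" if "u \<in> V" "v \<in> V" for u v
    by (rule dist_le_mono[OF split_dist_le_3[OF assms(1,2) that] assms(3)])
  then show ?thesis unfolding graph_power_def complete_edges_def by blast
qed

text \<open>In a weak IASI every edge has an end vertex with a singleton label: otherwise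
  the sumset of the two labels would be larger than both of them.\<close>
lemma WIASI_edge_singleton:
  assumes W: "WIASI V E f" and e: "{u, v} \<in> E" "u \<in> V" "v \<in> V"
  shows "card (f u) = 1 \<or> card (f v) = 1"
proof (rule ccontr)
  assume no_singleton: "\<not> ?thesis"
  have labels: "finite (f u)" "f u \<noteq> {}" "finite (f v)" "f v \<noteq> {}"
    using W e unfolding WIASI_def IASI_def by auto
  then have "card (f u) \<noteq> 0" "card (f v) \<noteq> 0" by simp_all
  then have big: "2 \<le> card (f u)" "2 \<le> card (f v)"
    using no_singleton by auto
  have "card (f v) < card (sumset (f u) (f v))"
    using card_sumset_gt labels big by blast
  moreover have "card (f u) < card (sumset (f u) (f v))"
    using card_sumset_gt[of "f v" "f u"] labels big by (simp add: sumset_commute)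
  moreover have "card (sumset (f u) (f v)) = max (card (f u)) (card (f v))"
    using W e unfolding WIASI_def by blast
  ultimately show False by (simp add: max_def split: if_splits)
qed

lemma WIASI_complete_non_singletons:
  assumes "finite V" "WIASI V (complete_edges V) f"
  shows "card {v \<in> V. card (f v) \<noteq> 1} \<le> 1"
proof -
  have "x = y" if "x \<in> V" "y \<in> V" "card (f x) \<noteq> 1" "card (f y) \<noteq> 1" for x y
    using WIASI_edge_singleton[OF assms(2), of x y] that by (auto simp: complete_edges_iff)
  then have "card {v \<in> V. card (f v) \<noteq> 1} \<le> Suc 0"
    using assms(1) by (subst card_le_Suc0_iff_eq) auto
  then show ?thesis by simp
qed

lemma finite_mono_edges_complete:
  assumes "finite V"
  shows "finite (mono_edges (complete_edges V) f)"
proof (rule finite_subset)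
  show "mono_edges (complete_edges V) f \<subseteq> Pow V"
    unfolding mono_edges_def complete_edges_def by auto
qed (use assms in simp)

text \<open>Lower bound: all pairs of singleton-labelled vertices are mono-indexed edges, and at
  least card V - 1 vertices are singleton-labelled.\<close>
lemma mono_edges_complete_lower:
  assumes V: "finite V" and W: "WIASI V (complete_edges V) f"
  shows "(card V - 1) choose 2 \<le> card (mono_edges (complete_edges V) f)"
proof -
  define S where "S = {v \<in> V. card (f v) = 1}"
  have SV: "S \<subseteq> V" and finS: "finite S" using V finite_subset by (auto simp: S_def)
  have "V - S = {v \<in> V. card (f v) \<noteq> 1}" by (auto simp: S_def)
  then have "card V - card S \<le> 1"
    using WIASI_complete_non_singletons[OF V W] card_Diff_subset[OF finS SV] by simp
  then have "card V - 1 \<le> card S" by linarith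
  have pairs_mono: "{B. B \<subseteq> S \<and> card B = 2} \<subseteq> mono_edges (complete_edges V) f"
  proof
    fix B assume "B \<in> {B. B \<subseteq> S \<and> card B = 2}"
    then obtain x y where B: "B = {x, y}" "x \<noteq> y" "x \<in> S" "y \<in> S" by (auto simp: card_2_iff)
    then have "card (sumset (f x) (f y)) = 1"
      by (auto simp: S_def card_1_singleton_iff sumset_singletons)
    then show "B \<in> mono_edges (complete_edges V) f"
      using B SV unfolding mono_edges_def by (auto simp: complete_edges_iff)
  qed
  have "(card V - 1) choose 2 \<le> card S choose 2"
    using \<open>card V - 1 \<le> card S\<close> by (rule binomial_right_mono)
  also have "\<dots> = card {B. B \<subseteq> S \<and> card B = 2}"
    using n_subsets[OF finS] by simp
  also have "\<dots> \<le> card (mono_edges (complete_edges V) f)"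
    by (rule card_mono[OF finite_mono_edges_complete[OF V] pairs_mono])
  finally show ?thesis .
qed

text \<open>A sum of two distinct powers of two determines the two exponents (uniqueness of
  binary expansions): the larger exponent j is the one with 2 ^ j \<le> 2 ^ i + 2 ^ j < 2 ^ (j + 1).\<close>
lemma pow2_sum_ordered_inj:
  assumes "i < j" "k < l" and sum: "(2::nat) ^ i + 2 ^ j = 2 ^ k + 2 ^ l"
  shows "i = k \<and> j = l"
proof -
  have "\<not> j < l"
  proof
    assume "j < l"
    then have "(2::nat) ^ Suc j \<le> 2 ^ l" by (intro power_increasing) auto
    moreover have "(2::nat) ^ i + 2 ^ j < 2 ^ Suc j" using assms(1) by simp
    ultimately show False using sum by linarith
  qed
  moreover have "\<not> l < j"
  proof
    assume "l < j"
    then have "(2::nat) ^ Suc l \<le> 2 ^ j" by (intro power_increasing) auto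
    moreover have "(2::nat) ^ k + 2 ^ l < 2 ^ Suc l" using assms(2) by simp
    ultimately show False using sum by linarith
  qed
  ultimately have "j = l" by simp
  then show ?thesis using sum by simp
qed

lemma pow2_sum_inj:
  assumes "i \<noteq> j" "k \<noteq> l" "(2::nat) ^ i + 2 ^ j = 2 ^ k + 2 ^ l"
  shows "{i, j} = {k, l}"
proof -
  have "i = k \<and> j = l" if "i < j" "k < l" "(2::nat) ^ i + 2 ^ j = 2 ^ k + 2 ^ l" for i j k l :: nat
    using pow2_sum_ordered_inj that by blast
  from this[of i j k l] this[of j i k l] this[of i j l k] this[of j i l k]
  show ?thesis using assms by (auto simp: neq_iff add.commute)
qed

definition pow2_labelling :: "'a \<Rightarrow> ('a \<Rightarrow> nat) \<Rightarrow> 'a \<Rightarrow> nat set" where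
  "pow2_labelling v0 g v = (if v = v0 then {0, 1} else {2 ^ g v})"

lemma pow2_labelling_sumset:
  assumes "u \<noteq> v"
  obtains w where "w \<in> {u, v}" "w \<noteq> v0" "{u, v} = {v0, w}"
      "sumset (pow2_labelling v0 g u) (pow2_labelling v0 g v) = {2 ^ g w, Suc (2 ^ g w)}"
    | "u \<noteq> v0" "v \<noteq> v0"
      "sumset (pow2_labelling v0 g u) (pow2_labelling v0 g v) = {2 ^ g u + 2 ^ g v}"
proof -
  have shift: "sumset {0, 1} {b} = {b, Suc b}" "sumset {b} {0, 1} = {b, Suc b}" for b :: nat
    unfolding sumset_def by auto
  show ?thesis
    using assms that shift sumset_singletons
    by (cases "u = v0"; cases "v = v0") (auto simp: pow2_labelling_def insert_commute)
qed

text \<open>Distinct edges get distinct sumsets: the edges at v0 are told apart by the least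
  element of their sumset, the others by the uniqueness of binary expansions.\<close>
lemma pow2_labelling_edges_inj:
  assumes g: "inj_on g V"
    and uv: "u \<in> V" "v \<in> V" "u \<noteq> v" and xy: "x \<in> V" "y \<in> V" "x \<noteq> y"
    and eq: "sumset (pow2_labelling v0 g u) (pow2_labelling v0 g v)
           = sumset (pow2_labelling v0 g x) (pow2_labelling v0 g y)"
  shows "{u, v} = {x, y}"
proof (cases rule: pow2_labelling_sumset[OF uv(3), of v0 g])
  case (1 w)
  note at_v0 = 1
  show ?thesis
  proof (cases rule: pow2_labelling_sumset[OF xy(3), of v0 g])
    case (1 w')
    have "w \<in> V" "w' \<in> V" using at_v0(1) 1(1) uv xy by auto
    have "{2 ^ g w, Suc (2 ^ g w)} = {2 ^ g w', Suc (2 ^ g w')}"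
      using at_v0(4) 1(4) eq by simp
    then have "g w = g w'" by (auto simp: doubleton_eq_iff)
    then have "w = w'" using g \<open>w \<in> V\<close> \<open>w' \<in> V\<close> by (simp add: inj_on_eq_iff)
    then show ?thesis using at_v0(3) 1(3) by simp
  next
    case 2
    then show ?thesis using at_v0(4) eq by auto
  qed
next
  case 2
  note off_v0 = 2
  show ?thesis
  proof (cases rule: pow2_labelling_sumset[OF xy(3), of v0 g])
    case (1 w')
    then show ?thesis using off_v0(3) eq by auto
  next
    case 2
    have sum: "(2::nat) ^ g u + 2 ^ g v = 2 ^ g x + 2 ^ g y"
      using off_v0(3) 2(3) eq by simp
    have "g u \<noteq> g v" "g x \<noteq> g y"
      using g uv xy by (auto simp: inj_on_eq_iff)
    then have "{g u, g v} = {g x, g y}" using pow2_sum_inj sum by blast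
    then have "g ` {u, v} = g ` {x, y}" by simp
    moreover have "{u, v} \<subseteq> V" "{x, y} \<subseteq> V" using uv xy by simp_all
    ultimately show ?thesis using inj_on_image_eq_iff[OF g] by blast
  qed
qed

lemma pow2_labelling_WIASI:
  assumes g: "inj_on g V"
  shows "WIASI V (complete_edges V) (pow2_labelling v0 g)"
proof -
  let ?f = "pow2_labelling v0 g"
  have "inj_on ?f V"
    using g by (auto simp: inj_on_def pow2_labelling_def doubleton_eq_iff)
  moreover have "{u, v} = {x, y}"
    if "{u, v} \<in> complete_edges V" "{x, y} \<in> complete_edges V"
       "sumset (?f u) (?f v) = sumset (?f x) (?f y)" for u v x y
    using pow2_labelling_edges_inj[OF g] that by (simp add: complete_edges_iff)
  ultimately have "IASI V (complete_edges V) ?f"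
    unfolding IASI_def by (auto simp: pow2_labelling_def)
  moreover have "card (sumset (?f u) (?f v)) = max (card (?f u)) (card (?f v))"
    if "{u, v} \<in> complete_edges V" for u v
  proof -
    have "u \<noteq> v" using that by (simp add: complete_edges_iff)
    then show ?thesis
      by (cases rule: pow2_labelling_sumset[of u v v0 g]) (auto simp: pow2_labelling_def)
  qed
  ultimately show ?thesis unfolding WIASI_def by blast
qed

text \<open>Upper bound: only edges avoiding v0 are mono-indexed.\<close>
lemma pow2_labelling_mono_edges:
  assumes "finite V" "v0 \<in> V"
  shows "card (mono_edges (complete_edges V) (pow2_labelling v0 g)) \<le> (card V - 1) choose 2"
proof -
  have "mono_edges (complete_edges V) (pow2_labelling v0 g) \<subseteq> {B. B \<subseteq> V - {v0} \<and> card B = 2}"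
  proof
    fix e assume "e \<in> mono_edges (complete_edges V) (pow2_labelling v0 g)"
    then obtain u v where e: "e = {u, v}" "e \<in> complete_edges V"
        "card (sumset (pow2_labelling v0 g u) (pow2_labelling v0 g v)) = 1"
      unfolding mono_edges_def by blast
    then have uv: "u \<in> V" "v \<in> V" "u \<noteq> v" by (simp_all add: complete_edges_iff)
    then have "u \<noteq> v0 \<and> v \<noteq> v0"
      using e(3) by (cases rule: pow2_labelling_sumset[OF uv(3), of v0 g]) auto
    then show "e \<in> {B. B \<subseteq> V - {v0} \<and> card B = 2}" using e(1) uv by auto
  qed
  then have "card (mono_edges (complete_edges V) (pow2_labelling v0 g))
      \<le> card {B. B \<subseteq> V - {v0} \<and> card B = 2}"
    using assms(1) by (intro card_mono) auto
  also have "\<dots> = (card V - 1) choose 2"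
    using n_subsets[of "V - {v0}" 2] assms by simp
  finally show ?thesis .
qed

lemma sparing_number_complete:
  assumes "finite V" "V \<noteq> {}"
  shows "sparing_number V (complete_edges V) = (card V - 1) choose 2"
  unfolding sparing_number_def
proof (rule Least_equality)
  obtain v0 where v0: "v0 \<in> V" using assms(2) by blast
  obtain g :: "'a \<Rightarrow> nat" where g: "inj_on g V"
    using finite_imp_inj_to_nat_seg[OF assms(1)] by blast
  let ?f = "pow2_labelling v0 g"
  have W: "WIASI V (complete_edges V) ?f" by (rule pow2_labelling_WIASI[OF g])
  have "card (mono_edges (complete_edges V) ?f) = (card V - 1) choose 2"
    using pow2_labelling_mono_edges[OF assms(1) v0, of g] mono_edges_complete_lower[OF assms(1) W]
    by linarith
  then show "\<exists>f. WIASI V (complete_edges V) f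
      \<and> card (mono_edges (complete_edges V) f) = (card V - 1) choose 2"
    using W by blast
next
  fix n assume "\<exists>f. WIASI V (complete_edges V) f \<and> card (mono_edges (complete_edges V) f) = n"
  then show "(card V - 1) choose 2 \<le> n"
    using mono_edges_complete_lower[OF assms(1)] by blast
qed

lemma real_choose_two: "real (n choose 2) = real n * (real n - 1) / 2"
proof (induction n)
  case (Suc n)
  have "Suc n choose 2 = n + (n choose 2)"
    by (simp add: numeral_2_eq_2)
  then show ?case using Suc by (simp add: field_simps)
qed simp

theorem mainTheorem7:
  fixes V :: "'a set" and E :: "'a set set" and K I :: "'a set" and r s t :: nat
  assumes "graph V E"
    and "connected_graph V E"
    and "is_split_partition V E K I"
    and "card K = r" and "card I = s"
    and "t \<ge> 3"
  shows "real (sparing_number V (graph_power V E t))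
           = (real r + real s - 1) * (real r + real s - 2) / 2"
proof -
  have V: "finite V" using assms(1) unfolding graph_def by blast
  have nonempty: "V \<noteq> {}" using assms(2) unfolding connected_graph_def by blast
  then have n_pos: "card V \<ge> 1" using V by (simp add: Suc_le_eq card_gt_0_iff)
  have "K \<union> I = V" "K \<inter> I = {}" using assms(3) unfolding is_split_partition_def by auto
  then have n: "card V = r + s"
    using V assms(4,5) card_Un_disjoint[of K I] by (metis finite_Un)
  have "graph_power V E t = complete_edges V"
    by (rule split_graph_power_complete[OF assms(1,3,6)])
  then have "sparing_number V (graph_power V E t) = (card V - 1) choose 2"
    using sparing_number_complete[OF V nonempty] by simp
  then show ?thesis
    using real_choose_two[of "card V - 1"] n_pos n by (simp add: of_nat_diff)
qed

end
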